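(* Consider the two-user, two-file broadcast caching network with correlated sources described in the context, with library generated by a 2-component discrete memoryless source $(\mathsf X_1,\mathsf X_2)\sim p(x_1,x_2)$ and (normalized) cache capacity $M\ge 0$ per receiver. Then the optimal peak rate-memory function satisfies $R^*(M)\ge R^{LB}(M)$, where \[ R^{LB}(M)=\inf\Big\{R:\; R\ge H(\mathsf X_1,\mathsf X_2)-2M,\;\; R\ge \tfrac12\big(H(\mathsf X_1,\mathsf X_2)-M\big),\;\; R\ge \tfrac12\Big(H(\mathsf X_1,\mathsf X_2)+\max\{H(\mathsf X_1),H(\mathsf X_2)\}\Big)-M\Big\}. \]
   Context: A 2-component discrete memoryless source (2-DMS) consists of finite alphabets $\mathcal X_1,\mathcal X_2$ and a joint pmf $p(x_1,x_2)$; it generates an i.i.d. process $\{(\mathsf X_{1i},\mathsf X_{2i})\}$ with $(\mathsf X_1,\mathsf X_2)\sim p$. For block length $n$ the library consists of the two files $X_1^n\in\mathcal X_1^n$ and $X_2^n\in\mathcal X_2^n$. One sender is connected to two receivers $r_1,r_2$ through a shared error-free broadcast link; each receiver has a cache of $nM$ bits. A cache-aided coded multicast (CACM) scheme of block length $n$ consists of: cache encoders $f^{\mathfrak C}_{r_i}:\mathcal X_1^n\times\mathcal X_2^n\to[1:2^{nM})$, giving cache contents $Z_{r_i}=f^{\mathfrak C}_{r_i}(X_1^n,X_2^n)$, $i=1,2$ (chosen before demands are known); for each demand vector $\mathbf d=(d_{r_1},d_{r_2})\in\{1,2\}^2$ (receiver $r_i$ requests file $X^n_{d_{r_i}}$),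 a multicast encoder producing a variable-length binary codeword $Y_{\mathbf d}=f^{\mathfrak M}(\mathbf d,Z_{r_1},Z_{r_2},X_1^n,X_2^n)$; and decoders $\widehat X^n_{d_{r_i}}=g^{\mathfrak M}_{r_i}(\mathbf d,Y_{\mathbf d},Z_{r_i})$. The worst-case error probability is $P_e^{(n)}=\max_{\mathbf d}\max_{i}\mathbb P(\widehat X^n_{d_{r_i}}\ne X^n_{d_{r_i}})$ and the peak rate is $R^{(n)}=\max_{\mathbf d}\mathbb E[L(Y_{\mathbf d})]/n$, where $L(\cdot)$ is codeword length in bits and the expectation is over the library. A pair $(R,M)$ is achievable if there is a sequence of CACM schemes with cache capacity $M$ and increasing $n$ such that $P_e^{(n)}\to0$ and $\limsup_n R^{(n)}\le R$. The peak rate-memory region is the closure of the set of achievable pairs, and $R^*(M)=\inf\{R:(R,M)\text{ in this region}\}$. *)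

theory Defs
  imports "HOL-Analysis.Analysis" "HOL-Probability.Probability_Mass_Function"
begin

definition entropy_pmf :: "'c::finite pmf \<Rightarrow> real" where
  "entropy_pmf q = - (\<Sum>x\<in>UNIV. pmf q x * log 2 (pmf q x))"

text \<open>Block-length n realisations of the 2-DMS: a list of n symbol pairs;
  the files are X1^n = map fst xs and X2^n = map snd xs. i.i.d. weight.\<close>
definition seqs :: "nat \<Rightarrow> ('a \<times> 'b) list set" where
  "seqs n = {xs. length xs = n}"

definition wt :: "('a \<times> 'b) pmf \<Rightarrow> ('a \<times> 'b) list \<Rightarrow> real" where
  "wt p xs = prod_list (map (pmf p) xs)"

definition prob_lib :: "('a \<times> 'b) pmf \<Rightarrow> nat \<Rightarrow> ('a list \<Rightarrow> 'b list \<Rightarrow> bool) \<Rightarrow> real" where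
  "prob_lib p n E = (\<Sum>xs\<in>seqs n. if E (map fst xs) (map snd xs) then wt p xs else 0)"

definition expect_lib :: "('a \<times> 'b) pmf \<Rightarrow> nat \<Rightarrow> ('a list \<Rightarrow> 'b list \<Rightarrow> real) \<Rightarrow> real" where
  "expect_lib p n f = (\<Sum>xs\<in>seqs n. wt p xs * f (map fst xs) (map snd xs))"

text \<open>Receivers are indexed by i \<in> {1,2}, demand vectors
  d = (d_r1, d_r2) \<in> {1,2}^2. The decoder of receiver i outputs a pair, of which
  the component for the requested file is the estimate.\<close>
record ('a, 'b) cacm =
  cache :: "nat \<Rightarrow> 'a list \<Rightarrow> 'b list \<Rightarrow> nat"
  mcast :: "nat \<times> nat \<Rightarrow> nat \<Rightarrow> nat \<Rightarrow> 'a list \<Rightarrow> 'b list \<Rightarrow> bool list"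
  dec :: "nat \<Rightarrow> nat \<times> nat \<Rightarrow> bool list \<Rightarrow> nat \<Rightarrow> 'a list \<times> 'b list"

definition demands :: "(nat \<times> nat) set" where
  "demands = {1,2} \<times> {1,2}"

definition req :: "nat \<times> nat \<Rightarrow> nat \<Rightarrow> nat" where
  "req d i = (if i = 1 then fst d else snd d)"

text \<open>Cache capacity nM bits: cache index in {1,...,floor(2^(nM))}.\<close>
definition valid_cacm :: "nat \<Rightarrow> real \<Rightarrow> ('a, 'b) cacm \<Rightarrow> bool" where
  "valid_cacm n M S \<longleftrightarrow> (\<forall>i\<in>{1,2}. \<forall>xs\<in>seqs n.
      1 \<le> cache S i (map fst xs) (map snd xs) \<and>
      real (cache S i (map fst xs) (map snd xs)) \<le> 2 powr (real n * M))"

definition codeword :: "('a, 'b) cacm \<Rightarrow> nat \<times> nat \<Rightarrow> 'a list \<Rightarrow> 'b list \<Rightarrow> bool list" where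
  "codeword S d x1 x2 = mcast S d (cache S 1 x1 x2) (cache S 2 x1 x2) x1 x2"

definition err_event :: "('a, 'b) cacm \<Rightarrow> nat \<times> nat \<Rightarrow> nat \<Rightarrow> 'a list \<Rightarrow> 'b list \<Rightarrow> bool" where
  "err_event S d i x1 x2 =
     (let out = dec S i d (codeword S d x1 x2) (cache S i x1 x2)
      in if req d i = 1 then fst out \<noteq> x1 else snd out \<noteq> x2)"

definition Pe :: "('a \<times> 'b) pmf \<Rightarrow> nat \<Rightarrow> ('a, 'b) cacm \<Rightarrow> real" where
  "Pe p n S = Max ((\<lambda>(d, i). prob_lib p n (err_event S d i)) ` (demands \<times> {1,2}))"

definition rate :: "('a \<times> 'b) pmf \<Rightarrow> nat \<Rightarrow> ('a, 'b) cacm \<Rightarrow> real" where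
  "rate p n S = Max ((\<lambda>d. expect_lib p n (\<lambda>x1 x2. real (length (codeword S d x1 x2))) / real n) ` demands)"

definition achievable :: "('a \<times> 'b) pmf \<Rightarrow> real \<Rightarrow> real \<Rightarrow> bool" where
  "achievable p R M \<longleftrightarrow> (\<exists>(nn :: nat \<Rightarrow> nat) (S :: nat \<Rightarrow> ('a, 'b) cacm).
      strict_mono nn \<and> (\<forall>k. valid_cacm (nn k) M (S k)) \<and>
      (\<lambda>k. Pe p (nn k) (S k)) \<longlonglongrightarrow> 0 \<and>
      limsup (\<lambda>k. ereal (rate p (nn k) (S k))) \<le> ereal R)"

definition region :: "('a \<times> 'b) pmf \<Rightarrow> (real \<times> real) set" where
  "region p = closure {(R, M). achievable p R M}"

definition Rstar :: "('a \<times> 'b) pmf \<Rightarrow> real \<Rightarrow> ereal" where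
  "Rstar p M = Inf (ereal ` {R. (R, M) \<in> region p})"

definition RLB :: "('a::finite \<times> 'b::finite) pmf \<Rightarrow> real \<Rightarrow> real" where
  "RLB p M = Inf {R. R \<ge> entropy_pmf p - 2 * M \<and>
                     R \<ge> (entropy_pmf p - M) / 2 \<and>
                     R \<ge> (entropy_pmf p + max (entropy_pmf (map_pmf fst p)) (entropy_pmf (map_pmf snd p))) / 2 - M}"

end

theory Submission
  imports Defs "HOL-Real_Asymp.Real_Asymp"
begin

text \<open>Each constraint on \<open>R\<close> is a cut-set bound for a scheme of block length \<open>n\<close>, obtained
  from Fano's inequality and submodularity of entropy, with the library \<open>(X\<^sub>1\<^sup>n, X\<^sub>2\<^sup>n)\<close>
  as random variable. If both receivers decode under the demand \<open>(1,2)\<close>, then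
  \<open>n H(X\<^sub>1,X\<^sub>2) \<le> H(Y) + H(Z\<^sub>1) + H(Z\<^sub>2) + o(n)\<close>; if receiver 1 decodes both files under the
  demands \<open>(1,2)\<close> and \<open>(2,1)\<close>, then \<open>n H(X\<^sub>1,X\<^sub>2) \<le> H(Y\<^sub>1\<^sub>2) + H(Y\<^sub>2\<^sub>1) + H(Z\<^sub>1) + o(n)\<close>;
  and since \<open>X\<^sub>1\<close> is decodable both from \<open>(Y\<^sub>1\<^sub>2, Z\<^sub>1)\<close> and from \<open>(Y\<^sub>2\<^sub>1, Z\<^sub>2)\<close> while \<open>X\<^sub>2\<close>
  is decodable from their union,
  \<open>n H(X\<^sub>1,X\<^sub>2) + n H(X\<^sub>1) \<le> H(Y\<^sub>1\<^sub>2) + H(Z\<^sub>1) + H(Y\<^sub>2\<^sub>1) + H(Z\<^sub>2) + o(n)\<close>, and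
  symmetrically for \<open>X\<^sub>2\<close>. A cache has
  entropy at most \<open>nM\<close> and a variable-length codeword at most its expected length plus
  \<open>O(log n)\<close>; dividing by \<open>n\<close> and letting \<open>n \<rightarrow> \<infinity>\<close> along an achieving sequence bounds every
  achievable \<open>R\<close>, and the bound passes to the closure because \<open>R\<^sup>L\<^sup>B\<close> is continuous.\<close>

definition rv_prob :: "'x set \<Rightarrow> ('x \<Rightarrow> real) \<Rightarrow> ('x \<Rightarrow> 'v) \<Rightarrow> 'v \<Rightarrow> real" where
  "rv_prob \<Omega> w f v = (\<Sum>x\<in>\<Omega>. if f x = v then w x else 0)"

definition rv_entropy :: "'x set \<Rightarrow> ('x \<Rightarrow> real) \<Rightarrow> ('x \<Rightarrow> 'v) \<Rightarrow> real" where
  "rv_entropy \<Omega> w f = - (\<Sum>v\<in>f ` \<Omega>. rv_prob \<Omega> w f v * log 2 (rv_prob \<Omega> w f v))"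

lemma mult_log_ratio_le:
  fixes P q :: real
  assumes "P \<ge> 0" "q \<ge> 0" "P > 0 \<Longrightarrow> q > 0"
  shows "P * (log 2 q - log 2 P) \<le> (q - P) / ln 2"
proof (cases "P > 0")
  case True
  then have q: "q > 0" using assms by auto
  have "log 2 q - log 2 P = ln (q / P) / ln 2"
    using True q by (simp add: log_def ln_div diff_divide_distrib)
  also have "\<dots> \<le> (q / P - 1) / ln 2"
    using ln_le_minus_one[of "q / P"] True q by (intro divide_right_mono) auto
  finally have "P * (log 2 q - log 2 P) \<le> P * ((q / P - 1) / ln 2)"
    using True by (intro mult_left_mono) auto
  also have "\<dots> = (q - P) / ln 2" using True by (simp add: field_simps)
  finally show ?thesis .
next
  case False
  then show ?thesis using assms by simp
qed

lemma sum_geometric_length_weights_le_1: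
  fixes A :: "bool list set" and \<theta> :: real
  assumes "finite A" "0 < \<theta>" "\<theta> < 1"
  shows "(\<Sum>y\<in>A. (1 - \<theta>) * (\<theta> / 2) ^ length y) \<le> 1"
proof -
  define q where "q y = (1 - \<theta>) * (\<theta> / 2) ^ length y" for y :: "bool list"
  define K where "K = Max (length ` A)"
  define T where "T l = {y :: bool list. length y = l}" for l
  have finT: "finite (T l)" for l
    unfolding T_def using finite_lists_length_eq[of "UNIV :: bool set" l] by simp
  have A_sub: "A \<subseteq> (\<Union>l\<in>{..K}. T l)"
    unfolding T_def K_def using assms(1) by (auto intro: Max_ge)
  have "(\<Sum>y\<in>A. q y) \<le> (\<Sum>y\<in>(\<Union>l\<in>{..K}. T l). q y)"
    by (rule sum_mono2[OF _ A_sub]) (use finT finT[unfolded T_def] assms in \<open>auto simp: q_def\<close>)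
  also have "\<dots> = (\<Sum>l\<in>{..K}. \<Sum>y\<in>T l. q y)"
    by (rule sum.UNION_disjoint) (use finT[unfolded T_def] in \<open>auto simp: T_def\<close>)
  also have "\<dots> = (\<Sum>l\<in>{..K}. (1 - \<theta>) * \<theta> ^ l)"
  proof (rule sum.cong)
    fix l
    have "card (T l) = 2 ^ l"
      unfolding T_def using card_lists_length_eq[of "UNIV :: bool set" l] by simp
    then have "(\<Sum>y\<in>T l. q y) = 2 ^ l * ((1 - \<theta>) * (\<theta> / 2) ^ l)"
      by (simp add: q_def T_def)
    also have "\<dots> = (1 - \<theta>) * \<theta> ^ l" by (simp add: power_divide)
    finally show "(\<Sum>y\<in>T l. q y) = (1 - \<theta>) * \<theta> ^ l" .
  qed simp
  also have "\<dots> = (1 - \<theta>) * (\<Sum>l<Suc K. \<theta> ^ l)"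
    by (simp add: sum_distrib_left lessThan_Suc_atMost)
  also have "\<dots> = 1 - \<theta> ^ Suc K"
    using assms by (simp only: sum_gp_strict) (simp add: field_simps)
  also have "\<dots> \<le> 1" using assms by simp
  finally show ?thesis unfolding q_def .
qed

locale finite_prob_weights =
  fixes \<Omega> :: "'x set" and w :: "'x \<Rightarrow> real"
  assumes finite_space: "finite \<Omega>" and weight_nonneg: "\<And>x. x \<in> \<Omega> \<Longrightarrow> w x \<ge> 0"
    and sum_weight: "sum w \<Omega> = 1"
begin

abbreviation Pr where "Pr \<equiv> rv_prob \<Omega> w"
abbreviation H where "H \<equiv> rv_entropy \<Omega> w"

lemma rv_prob_nonneg: "Pr f v \<ge> 0"
  unfolding rv_prob_def by (rule sum_nonneg) (auto intro: weight_nonneg)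

lemma rv_prob_eq_sum: "Pr f v = sum w {x\<in>\<Omega>. f x = v}"
  unfolding rv_prob_def using finite_space by (simp add: sum.inter_filter)

lemma rv_prob_pos:
  assumes "x \<in> \<Omega>" "w x > 0"
  shows "Pr f (f x) > 0"
proof -
  have "sum w {x} \<le> sum w {y\<in>\<Omega>. f y = f x}"
    by (rule sum_mono2) (use finite_space assms weight_nonneg in auto)
  then show ?thesis using assms(2) by (simp add: rv_prob_eq_sum)
qed

lemma sum_weight_by_value: "(\<Sum>x\<in>\<Omega>. w x * g (f x)) = (\<Sum>v\<in>f ` \<Omega>. Pr f v * g v)"
proof -
  have "(\<Sum>x\<in>\<Omega>. w x * g (f x)) = (\<Sum>v\<in>f ` \<Omega>. \<Sum>x\<in>{x\<in>\<Omega>. f x = v}. w x * g (f x))"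
    using finite_space by (rule sum.image_gen)
  also have "\<dots> = (\<Sum>v\<in>f ` \<Omega>. Pr f v * g v)"
    by (rule sum.cong) (auto simp: rv_prob_eq_sum sum_distrib_right)
  finally show ?thesis .
qed

lemma rv_entropy_eq: "H f = - (\<Sum>x\<in>\<Omega>. w x * log 2 (Pr f (f x)))"
  unfolding rv_entropy_def using sum_weight_by_value[of "\<lambda>v. log 2 (Pr f v)" f] by simp

lemma sum_rv_prob: "(\<Sum>v\<in>f ` \<Omega>. Pr f v) = 1"
  using sum_weight_by_value[of "\<lambda>v. 1" f] sum_weight by simp

lemma rv_entropy_cong:
  assumes "\<And>x y. x \<in> \<Omega> \<Longrightarrow> y \<in> \<Omega> \<Longrightarrow> f x = f y \<longleftrightarrow> g x = g y"
  shows "H f = H g"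
proof -
  have "Pr f (f x) = Pr g (g x)" if "x \<in> \<Omega>" for x
    unfolding rv_prob_eq_sum using assms that by (intro arg_cong[where f="sum w"]) auto
  then show ?thesis unfolding rv_entropy_eq by (simp cong: sum.cong)
qed

lemma rv_entropy_le_if_determined:
  assumes "\<And>x y. x \<in> \<Omega> \<Longrightarrow> y \<in> \<Omega> \<Longrightarrow> g x = g y \<Longrightarrow> f x = f y"
  shows "H f \<le> H g"
proof -
  have "w x * log 2 (Pr g (g x)) \<le> w x * log 2 (Pr f (f x))" if x: "x \<in> \<Omega>" for x
  proof (cases "w x > 0")
    case True
    have sub: "{y\<in>\<Omega>. g y = g x} \<subseteq> {y\<in>\<Omega>. f y = f x}"
      using assms x by blast
    have "Pr g (g x) \<le> Pr f (f x)"
      unfolding rv_prob_eq_sum by (rule sum_mono2[OF _ sub]) (use finite_space weight_nonneg in auto)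
    then show ?thesis using True rv_prob_pos[OF x True, of g] by (intro mult_left_mono) auto
  next
    case False
    then show ?thesis using weight_nonneg[OF x] by simp
  qed
  then show ?thesis unfolding rv_entropy_eq by (simp add: sum_mono)
qed

lemma rv_entropy_le_cross_entropy:
  assumes q_nonneg: "\<And>v. v \<in> f ` \<Omega> \<Longrightarrow> q v \<ge> 0"
    and q_pos: "\<And>x. x \<in> \<Omega> \<Longrightarrow> w x > 0 \<Longrightarrow> q (f x) > 0"
    and q_sum: "(\<Sum>v\<in>f ` \<Omega>. q v) \<le> 1"
  shows "H f \<le> - (\<Sum>x\<in>\<Omega>. w x * log 2 (q (f x)))"
proof -
  have q_pos': "q v > 0" if "Pr f v > 0" for v
  proof -
    obtain x where x: "x \<in> \<Omega>" "f x = v" "w x \<noteq> 0"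
      using \<open>Pr f v > 0\<close> unfolding rv_prob_eq_sum by (metis (mono_tags, lifting) mem_Collect_eq sum.neutral less_irrefl)
    then show ?thesis using q_pos[OF x(1)] weight_nonneg[OF x(1)] by force
  qed
  have "(\<Sum>v\<in>f ` \<Omega>. Pr f v * (log 2 (q v) - log 2 (Pr f v))) \<le> (\<Sum>v\<in>f ` \<Omega>. (q v - Pr f v) / ln 2)"
    by (intro sum_mono mult_log_ratio_le rv_prob_nonneg q_nonneg q_pos') auto
  also have "\<dots> = ((\<Sum>v\<in>f ` \<Omega>. q v) - 1) / ln 2"
    by (simp add: sum_divide_distrib[symmetric] sum_subtractf sum_rv_prob)
  also have "\<dots> \<le> 0" using q_sum by (simp add: divide_nonpos_pos)
  finally have "(\<Sum>v\<in>f ` \<Omega>. Pr f v * log 2 (q v)) \<le> (\<Sum>v\<in>f ` \<Omega>. Pr f v * log 2 (Pr f v))"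
    by (simp add: right_diff_distrib sum_subtractf)
  then show ?thesis
    unfolding rv_entropy_def sum_weight_by_value[of "\<lambda>v. log 2 (q v)"] by linarith
qed

lemma sum_rv_prob_pair_fst: "(\<Sum>a\<in>f ` \<Omega>. Pr (\<lambda>x. (f x, h x)) (a, c)) = Pr h c"
proof -
  have "(\<Sum>a\<in>f ` \<Omega>. Pr (\<lambda>x. (f x, h x)) (a, c))
      = (\<Sum>x\<in>\<Omega>. \<Sum>a\<in>f ` \<Omega>. if a = f x then (if h x = c then w x else 0) else 0)"
    unfolding rv_prob_def by (subst sum.swap) (auto intro!: sum.cong)
  also have "\<dots> = (\<Sum>x\<in>\<Omega>. if h x = c then w x else 0)"
    using finite_space by (intro sum.cong refl) (simp only: sum.delta finite_imageI, simp)
  finally show ?thesis unfolding rv_prob_def .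
qed

lemma rv_entropy_const: "H (\<lambda>x. c) = 0"
proof -
  have "Pr (\<lambda>x. c) c = 1" unfolding rv_prob_def using sum_weight by simp
  then show ?thesis unfolding rv_entropy_eq by simp
qed

text \<open>Cross entropy against \<open>P(f,h) P(g,h) / P(h)\<close>, the law making \<open>f\<close> and \<open>g\<close>
  conditionally independent given \<open>h\<close>.\<close>

lemma rv_entropy_submodular:
  "H (\<lambda>x. (f x, g x, h x)) + H h \<le> H (\<lambda>x. (f x, h x)) + H (\<lambda>x. (g x, h x))"
proof -
  define Pfh where "Pfh = Pr (\<lambda>x. (f x, h x))"
  define Pgh where "Pgh = Pr (\<lambda>x. (g x, h x))"
  define Ph where "Ph = Pr h"
  define q where "q v = Pfh (fst v, snd (snd v)) * Pgh (fst (snd v), snd (snd v)) / Ph (snd (snd v))" for v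
  let ?F = "\<lambda>x. (f x, g x, h x)"
  have q_nonneg: "q v \<ge> 0" for v
    unfolding q_def Pfh_def Pgh_def Ph_def by (simp add: rv_prob_nonneg)
  have "(\<Sum>v\<in>?F ` \<Omega>. q v) \<le> (\<Sum>v\<in>f ` \<Omega> \<times> (g ` \<Omega> \<times> h ` \<Omega>). q v)"
    by (rule sum_mono2) (use finite_space q_nonneg in auto)
  also have "\<dots> = (\<Sum>a\<in>f ` \<Omega>. \<Sum>b\<in>g ` \<Omega>. \<Sum>c\<in>h ` \<Omega>. q (a, b, c))"
    by (simp add: sum.cartesian_product)
  also have "\<dots> = (\<Sum>c\<in>h ` \<Omega>. \<Sum>a\<in>f ` \<Omega>. \<Sum>b\<in>g ` \<Omega>. q (a, b, c))"
    by (subst sum.swap, subst (2) sum.swap, rule refl)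
  also have "\<dots> = (\<Sum>c\<in>h ` \<Omega>. (\<Sum>a\<in>f ` \<Omega>. Pfh (a, c)) * (\<Sum>b\<in>g ` \<Omega>. Pgh (b, c)) / Ph c)"
    unfolding q_def by (intro sum.cong refl) (simp add: sum_product sum_divide_distrib)
  also have "\<dots> = 1"
    unfolding Pfh_def Pgh_def Ph_def sum_rv_prob_pair_fst by (simp add: sum_rv_prob)
  finally have q_sum: "(\<Sum>v\<in>?F ` \<Omega>. q v) \<le> 1" .
  have pos: "Pfh (f x, h x) > 0" "Pgh (g x, h x) > 0" "Ph (h x) > 0" if "x \<in> \<Omega>" "w x > 0" for x
    using rv_prob_pos[OF that] unfolding Pfh_def Pgh_def Ph_def by auto
  have "H ?F \<le> - (\<Sum>x\<in>\<Omega>. w x * log 2 (q (?F x)))"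
    by (rule rv_entropy_le_cross_entropy) (use q_nonneg q_sum pos in \<open>auto simp: q_def\<close>)
  also have "\<dots> = - (\<Sum>x\<in>\<Omega>. w x * log 2 (Pfh (f x, h x)) + w x * log 2 (Pgh (g x, h x))
                      - w x * log 2 (Ph (h x)))"
  proof (intro arg_cong[where f=uminus] sum.cong refl)
    fix x assume x: "x \<in> \<Omega>"
    show "w x * log 2 (q (?F x)) = w x * log 2 (Pfh (f x, h x)) + w x * log 2 (Pgh (g x, h x))
                                  - w x * log 2 (Ph (h x))"
    proof (cases "w x > 0")
      case True
      then show ?thesis using pos[OF x True] unfolding q_def
        by (simp add: log_divide_pos log_mult_pos algebra_simps)
    qed (use weight_nonneg[OF x] in simp)
  qed
  also have "\<dots> = H (\<lambda>x. (f x, h x)) + H (\<lambda>x. (g x, h x)) - H h"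
    unfolding rv_entropy_eq Pfh_def Pgh_def Ph_def by (simp add: sum.distrib sum_subtractf)
  finally show ?thesis by simp
qed

lemma rv_entropy_subadditive: "H (\<lambda>x. (f x, g x)) \<le> H f + H g"
proof -
  have "H (\<lambda>x. (f x, g x, ())) + H (\<lambda>x. ()) \<le> H (\<lambda>x. (f x, ())) + H (\<lambda>x. (g x, ()))"
    by (rule rv_entropy_submodular)
  moreover have "H (\<lambda>x. (f x, g x, ())) = H (\<lambda>x. (f x, g x))"
    and "H (\<lambda>x. (f x, ())) = H f" and "H (\<lambda>x. (g x, ())) = H g"
    by (auto intro: rv_entropy_cong)
  ultimately show ?thesis by (simp add: rv_entropy_const)
qed

lemma rv_entropy_subadditive3: "H (\<lambda>x. (f x, g x, h x)) \<le> H f + H g + H h"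
  using rv_entropy_subadditive[of f "\<lambda>x. (g x, h x)"] rv_entropy_subadditive[of g h] by simp

lemma rv_entropy_le_log_card:
  assumes "\<Omega> \<noteq> {}"
  shows "H f \<le> log 2 (card (f ` \<Omega>))"
proof -
  define N where "N = real (card (f ` \<Omega>))"
  have N: "N \<ge> 1" unfolding N_def using assms finite_space by (simp add: Suc_leI card_gt_0_iff)
  have "H f \<le> - (\<Sum>x\<in>\<Omega>. w x * log 2 (1 / N))"
    by (rule rv_entropy_le_cross_entropy) (use N in \<open>auto simp: N_def\<close>)
  also have "\<dots> = log 2 N"
    using N by (simp add: log_divide_pos sum_negf sum_distrib_right[symmetric] sum_weight)
  finally show ?thesis unfolding N_def .
qed

text \<open>Cross entropy against \<open>(1 - \<theta>) (\<theta>/2)^|y|\<close> on binary strings \<open>y\<close>.\<close>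

lemma rv_entropy_le_mean_length:
  fixes f :: "'x \<Rightarrow> bool list"
  assumes "0 < \<theta>" "\<theta> < 1"
  shows "H f \<le> log 2 (1 / (1 - \<theta>)) + (1 - log 2 \<theta>) * (\<Sum>x\<in>\<Omega>. w x * real (length (f x)))"
proof -
  define q where "q y = (1 - \<theta>) * (\<theta> / 2) ^ length y" for y :: "bool list"
  have q_pos: "q y > 0" for y unfolding q_def using assms by simp
  have log_q: "log 2 (q y) = log 2 (1 - \<theta>) + real (length y) * (log 2 \<theta> - 1)" for y
    unfolding q_def using assms by (simp add: log_mult_pos log_nat_power log_divide_pos)
  have "H f \<le> - (\<Sum>x\<in>\<Omega>. w x * log 2 (q (f x)))"
    by (rule rv_entropy_le_cross_entropy)
      (use q_pos sum_geometric_length_weights_le_1[OF finite_imageI[OF finite_space] assms]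
        in \<open>auto simp: q_def less_imp_le\<close>)
  also have "\<dots> = (\<Sum>x\<in>\<Omega>. - log 2 (1 - \<theta>) * w x + (1 - log 2 \<theta>) * (w x * real (length (f x))))"
    unfolding log_q by (simp add: algebra_simps flip: sum_negf)
  also have "\<dots> = log 2 (1 / (1 - \<theta>)) + (1 - log 2 \<theta>) * (\<Sum>x\<in>\<Omega>. w x * real (length (f x)))"
    unfolding sum.distrib sum_distrib_left[symmetric] using assms by (simp add: sum_weight log_divide_pos)
  finally show ?thesis .
qed

text \<open>Fano's inequality, via the cross entropy against \<open>P(W) / 2\<close> at the decoded value and
  \<open>P(W) / (2 |S|)\<close> elsewhere.\<close>

lemma fano_inequality:
  assumes S: "finite S" "S \<noteq> {}" "U ` \<Omega> \<subseteq> S"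
    and err: "Pr (\<lambda>x. \<phi> (W x) \<noteq> U x) True \<le> \<epsilon>"
  shows "H (\<lambda>x. (U x, W x)) \<le> H W + 1 + \<epsilon> * log 2 (card S)"
proof -
  define N where "N = real (card S)"
  have N: "N \<ge> 1" unfolding N_def using S by (simp add: Suc_leI card_gt_0_iff)
  define g where "g c a = (if a = \<phi> c then 1/2 else 1/(2*N))" for c a
  define q where "q v = Pr W (snd v) * g (snd v) (fst v)" for v
  let ?F = "\<lambda>x. (U x, W x)"
  have q_nonneg: "q v \<ge> 0" for v unfolding q_def g_def using N by (simp add: rv_prob_nonneg)
  have g_sum: "(\<Sum>a\<in>S. g c a) \<le> 1" for c
  proof -
    have "(\<Sum>a\<in>S. g c a) \<le> (\<Sum>a\<in>S. (if a = \<phi> c then 1/2 else 0) + 1/(2*N))"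
      by (rule sum_mono) (use N in \<open>auto simp: g_def\<close>)
    also have "\<dots> = (if \<phi> c \<in> S then 1/2 else 0) + N * (1/(2*N))"
      using S(1) by (simp add: sum.distrib N_def)
    also have "\<dots> \<le> 1" using N by auto
    finally show ?thesis .
  qed
  have "(\<Sum>v\<in>?F ` \<Omega>. q v) \<le> (\<Sum>v\<in>S \<times> W ` \<Omega>. q v)"
    by (rule sum_mono2) (use finite_space q_nonneg S in auto)
  also have "\<dots> = (\<Sum>c\<in>W ` \<Omega>. \<Sum>a\<in>S. q (a, c))"
    by (subst sum.swap) (simp add: sum.cartesian_product)
  also have "\<dots> = (\<Sum>c\<in>W ` \<Omega>. Pr W c * (\<Sum>a\<in>S. g c a))"
    by (simp add: q_def sum_distrib_left)
  also have "\<dots> \<le> (\<Sum>c\<in>W ` \<Omega>. Pr W c)"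
    by (rule sum_mono) (use g_sum in \<open>simp add: rv_prob_nonneg mult_left_le\<close>)
  also have "\<dots> = 1" by (rule sum_rv_prob)
  finally have q_sum: "(\<Sum>v\<in>?F ` \<Omega>. q v) \<le> 1" .
  have "H ?F \<le> - (\<Sum>x\<in>\<Omega>. w x * log 2 (q (?F x)))"
    by (rule rv_entropy_le_cross_entropy)
      (use q_nonneg q_sum rv_prob_pos N in \<open>auto simp: q_def g_def\<close>)
  also have "\<dots> \<le> (\<Sum>x\<in>\<Omega>. - (w x * log 2 (Pr W (W x))) + w x
                      + (if \<phi> (W x) \<noteq> U x then w x else 0) * log 2 N)"
    unfolding sum_negf[symmetric]
  proof (rule sum_mono)
    fix x assume x: "x \<in> \<Omega>"
    show "- (w x * log 2 (q (?F x))) \<le> - (w x * log 2 (Pr W (W x))) + w x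
            + (if \<phi> (W x) \<noteq> U x then w x else 0) * log 2 N"
    proof (cases "w x > 0")
      case True
      then have "Pr W (W x) > 0" using rv_prob_pos[OF x] by auto
      then have log_q: "log 2 (q (?F x)) = log 2 (Pr W (W x)) - 1 - (if \<phi> (W x) \<noteq> U x then log 2 N else 0)"
        unfolding q_def g_def using N by (auto simp: log_divide_pos log_mult_pos)
      show ?thesis unfolding log_q by (auto simp: algebra_simps)
    qed (use weight_nonneg[OF x] in simp)
  qed
  also have "\<dots> = H W + 1 + Pr (\<lambda>x. \<phi> (W x) \<noteq> U x) True * log 2 N"
    unfolding rv_entropy_eq[of W] rv_prob_def
    by (simp add: sum.distrib sum_negf sum_subtractf sum_distrib_right sum_weight if_distrib)
  also have "\<dots> \<le> H W + 1 + \<epsilon> * log 2 N"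
    using err N by (intro add_left_mono mult_right_mono) auto
  finally show ?thesis unfolding N_def .
qed

lemma entropy_pair_le_of_decodable:
  assumes S1: "finite S1" "S1 \<noteq> {}" "X1 ` \<Omega> \<subseteq> S1"
    and S2: "finite S2" "S2 \<noteq> {}" "X2 ` \<Omega> \<subseteq> S2"
    and err1: "Pr (\<lambda>x. \<phi> (W x) \<noteq> X1 x) True \<le> \<epsilon>"
    and err2: "Pr (\<lambda>x. \<psi> (W x) \<noteq> X2 x) True \<le> \<epsilon>"
  shows "H (\<lambda>x. (X1 x, X2 x)) \<le> H W + 2 + \<epsilon> * (log 2 (card S1) + log 2 (card S2))"
proof -
  have "H (\<lambda>x. (X1 x, X2 x)) \<le> H (\<lambda>x. (X1 x, X2 x, W x))"
    by (rule rv_entropy_le_if_determined) auto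
  moreover have "H (\<lambda>x. (X1 x, X2 x, W x)) + H W \<le> H (\<lambda>x. (X1 x, W x)) + H (\<lambda>x. (X2 x, W x))"
    by (rule rv_entropy_submodular)
  moreover have "H (\<lambda>x. (X1 x, W x)) \<le> H W + 1 + \<epsilon> * log 2 (card S1)"
    by (rule fano_inequality[where \<phi> = \<phi> and W = W, OF S1 err1])
  moreover have "H (\<lambda>x. (X2 x, W x)) \<le> H W + 1 + \<epsilon> * log 2 (card S2)"
    by (rule fano_inequality[where \<phi> = \<psi> and W = W, OF S2 err2])
  ultimately show ?thesis by (simp add: algebra_simps)
qed

lemma entropy_pair_plus_le_of_decodable:
  assumes SU: "finite SU" "SU \<noteq> {}" "U ` \<Omega> \<subseteq> SU"
    and SV: "finite SV" "SV \<noteq> {}" "V ` \<Omega> \<subseteq> SV"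
    and errA: "Pr (\<lambda>x. \<phi>A (A x) \<noteq> U x) True \<le> \<epsilon>"
    and errB: "Pr (\<lambda>x. \<phi>B (B x) \<noteq> U x) True \<le> \<epsilon>"
    and errV: "Pr (\<lambda>x. \<phi>V (A x, B x) \<noteq> V x) True \<le> \<epsilon>"
  shows "H (\<lambda>x. (U x, V x)) + H U \<le> H A + H B + 3 + \<epsilon> * (2 * log 2 (card SU) + log 2 (card SV))"
proof -
  have "H (\<lambda>x. (U x, V x)) \<le> H (\<lambda>x. (V x, A x, B x, U x))"
    by (rule rv_entropy_le_if_determined) auto
  moreover have "H (\<lambda>x. (V x, A x, B x, U x)) \<le> H (\<lambda>x. (A x, B x, U x)) + 1 + \<epsilon> * log 2 (card SV)"
    by (rule fano_inequality[OF SV, where \<phi> = "\<lambda>(a, b, u). \<phi>V (a, b)"]) (use errV in simp)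
  moreover have "H (\<lambda>x. (A x, B x, U x)) + H U \<le> H (\<lambda>x. (A x, U x)) + H (\<lambda>x. (B x, U x))"
    by (rule rv_entropy_submodular)
  moreover have "H (\<lambda>x. (A x, U x)) = H (\<lambda>x. (U x, A x))" "H (\<lambda>x. (B x, U x)) = H (\<lambda>x. (U x, B x))"
    by (auto intro: rv_entropy_cong)
  moreover have "H (\<lambda>x. (U x, A x)) \<le> H A + 1 + \<epsilon> * log 2 (card SU)"
    by (rule fano_inequality[where \<phi> = \<phi>A and W = A, OF SU errA])
  moreover have "H (\<lambda>x. (U x, B x)) \<le> H B + 1 + \<epsilon> * log 2 (card SU)"
    by (rule fano_inequality[where \<phi> = \<phi>B and W = B, OF SU errB])
  ultimately show ?thesis by (simp add: algebra_simps)
qed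

end

definition length_lists :: "nat \<Rightarrow> 'c list set" where
  "length_lists n = {xs. length xs = n}"

definition iid_weight :: "'c pmf \<Rightarrow> 'c list \<Rightarrow> real" where
  "iid_weight q xs = prod_list (map (pmf q) xs)"

lemma finite_length_lists: "finite (length_lists n :: 'c::finite list set)"
  unfolding length_lists_def using finite_lists_length_eq[of "UNIV :: 'c set" n] by simp

lemma card_length_lists: "card (length_lists n :: 'c::finite list set) = CARD('c) ^ n"
  unfolding length_lists_def using card_lists_length_eq[of "UNIV :: 'c set" n] by simp

lemma length_lists_nonempty: "length_lists n \<noteq> {}"
  unfolding length_lists_def by (auto intro!: exI[of _ "replicate n undefined"])

lemma map_image_length_lists: "map f ` length_lists n \<subseteq> length_lists n"
  unfolding length_lists_def by auto

lemma sum_length_lists_Suc: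
  "(\<Sum>ys\<in>length_lists (Suc n). F ys) = (\<Sum>x\<in>(UNIV :: 'c::finite set). \<Sum>xs\<in>length_lists n. F (x # xs))"
proof -
  have image: "length_lists (Suc n) = (\<lambda>(x, xs). x # xs) ` (UNIV \<times> length_lists n)"
    unfolding length_lists_def by (auto simp: length_Suc_conv image_iff)
  have inj: "inj_on (\<lambda>(x, xs). x # xs) (UNIV \<times> length_lists n)"
    by (auto simp: inj_on_def)
  show ?thesis unfolding image sum.reindex[OF inj] by (simp add: sum.cartesian_product split_def)
qed

lemma iid_weight_Nil [simp]: "iid_weight q [] = 1"
  by (simp add: iid_weight_def)

lemma iid_weight_Cons [simp]: "iid_weight q (x # xs) = pmf q x * iid_weight q xs"
  by (simp add: iid_weight_def)

lemma iid_weight_nonneg: "iid_weight q xs \<ge> 0"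
  by (induction xs) auto

lemma sum_iid_weight: "(\<Sum>xs\<in>length_lists n. iid_weight (q :: 'c::finite pmf) xs) = 1"
proof (induction n)
  case 0
  then show ?case by (simp add: length_lists_def)
next
  case (Suc n)
  then show ?case
    by (simp add: sum_length_lists_Suc sum_distrib_left[symmetric] sum_pmf_eq_1)
qed

lemma finite_prob_weights_iid: "finite_prob_weights (length_lists n) (iid_weight (q :: 'c::finite pmf))"
  by unfold_locales (auto simp: finite_length_lists iid_weight_nonneg sum_iid_weight)

lemma rv_prob_map_iid:
  "length a = n \<Longrightarrow> rv_prob (length_lists n) (iid_weight (q :: 'c::finite pmf)) (map g) a
     = iid_weight (map_pmf g q) a"
proof (induction n arbitrary: a)
  case 0
  then show ?case by (simp add: length_lists_def rv_prob_def)
next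
  case (Suc n)
  then obtain b bs where a: "a = b # bs" "length bs = n" by (auto simp: length_Suc_conv)
  have "pmf (map_pmf g q) b = (\<Sum>x\<in>UNIV. if g x = b then pmf q x else 0)"
    by (simp add: pmf_map measure_measure_pmf_finite sum.If_cases vimage_def)
  moreover have "rv_prob (length_lists (Suc n)) (iid_weight q) (map g) a
      = (\<Sum>x\<in>UNIV. if g x = b then pmf q x else 0) * rv_prob (length_lists n) (iid_weight q) (map g) bs"
    unfolding rv_prob_def sum_length_lists_Suc a sum_product
    by (intro sum.cong refl) simp
  ultimately show ?case using Suc.IH[OF a(2)] a(1) by simp
qed

lemma sum_iid_weight_mult_log:
  "- (\<Sum>xs\<in>length_lists n. iid_weight q xs * log 2 (iid_weight q xs))
     = real n * entropy_pmf (q :: 'c::finite pmf)"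
proof (induction n)
  case 0
  then show ?case by (simp add: length_lists_def)
next
  case (Suc n)
  have xlogx_mult: "a * b * log 2 (a * b) = b * (a * log 2 a) + a * (b * log 2 b)"
    if "a \<ge> 0" "b \<ge> 0" for a b :: real
    using that by (cases "a = 0 \<or> b = 0") (auto simp: log_mult_pos algebra_simps)
  have "(\<Sum>xs\<in>length_lists (Suc n). iid_weight q xs * log 2 (iid_weight q xs))
      = (\<Sum>x\<in>UNIV. \<Sum>xs\<in>length_lists n. iid_weight q xs * (pmf q x * log 2 (pmf q x))
                                        + pmf q x * (iid_weight q xs * log 2 (iid_weight q xs)))"
    unfolding sum_length_lists_Suc
    by (intro sum.cong refl) (simp add: xlogx_mult iid_weight_nonneg)
  also have "\<dots> = (\<Sum>x\<in>UNIV. pmf q x * log 2 (pmf q x))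
                 + (\<Sum>xs\<in>length_lists n. iid_weight q xs * log 2 (iid_weight q xs))"
    by (simp add: sum.distrib sum.swap[of _ UNIV] sum_distrib_left[symmetric]
        sum_distrib_right[symmetric] sum_iid_weight sum_pmf_eq_1)
  finally show ?case using Suc by (simp add: entropy_pmf_def algebra_simps)
qed

lemma rv_entropy_map_iid:
  "rv_entropy (length_lists n) (iid_weight (q :: 'c::finite pmf)) (map (g :: 'c \<Rightarrow> 'd::finite))
     = real n * entropy_pmf (map_pmf g q)"
proof -
  let ?P = "rv_prob (length_lists n) (iid_weight q) (map g)"
  have "(\<Sum>v\<in>map g ` length_lists n. ?P v * log 2 (?P v)) = (\<Sum>v\<in>length_lists n. ?P v * log 2 (?P v))"
  proof (rule sum.mono_neutral_left[OF finite_length_lists map_image_length_lists], intro ballI)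
    fix v assume "v \<in> length_lists n - map g ` length_lists n"
    then have "?P v = 0" unfolding rv_prob_def by (intro sum.neutral) auto
    then show "?P v * log 2 (?P v) = 0" by simp
  qed
  also have "\<dots> = (\<Sum>v\<in>length_lists n. iid_weight (map_pmf g q) v * log 2 (iid_weight (map_pmf g q) v))"
  proof (intro sum.cong refl)
    fix v :: "'d list" assume "v \<in> length_lists n"
    then have "?P v = iid_weight (map_pmf g q) v"
      by (intro rv_prob_map_iid) (simp add: length_lists_def)
    then show "?P v * log 2 (?P v) = iid_weight (map_pmf g q) v * log 2 (iid_weight (map_pmf g q) v)"
      by simp
  qed
  finally show ?thesis unfolding rv_entropy_def using sum_iid_weight_mult_log[where n = n and q = "map_pmf g q"] by simp
qed

lemma log_card_length_lists:
  "log 2 (card (length_lists n :: 'c::finite list set)) = real n * log 2 (real CARD('c))"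
  by (simp add: card_length_lists log_nat_power)

lemma map_fst_snd_eq_iff: "map fst xs = map fst ys \<and> map snd xs = map snd ys \<longleftrightarrow> xs = ys"
proof
  assume "map fst xs = map fst ys \<and> map snd xs = map snd ys"
  then have "zip (map fst xs) (map snd xs) = zip (map fst ys) (map snd ys)" by simp
  then show "xs = ys" by (simp only: zip_map_fst_snd)
qed simp

lemma seqs_eq_length_lists: "seqs n = length_lists n"
  by (simp add: seqs_def length_lists_def)

lemma wt_eq_iid_weight: "wt p xs = iid_weight p xs"
  by (simp add: wt_def iid_weight_def)

lemma prob_err_event_le_Pe:
  assumes "d \<in> demands" "i \<in> {1, 2}"
  shows "prob_lib p n (err_event S d i) \<le> Pe p n S"
  unfolding Pe_def using assms by (intro Max_ge) (auto simp: demands_def)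

lemma Pe_nonneg: "Pe p n S \<ge> 0"
proof -
  have "prob_lib p n (err_event S (1, 1) 1) \<le> Pe p n S"
    by (rule prob_err_event_le_Pe) (auto simp: demands_def)
  moreover have "prob_lib p n (err_event S (1, 1) 1) \<ge> 0"
    unfolding prob_lib_def wt_eq_iid_weight by (intro sum_nonneg) (simp add: iid_weight_nonneg)
  ultimately show ?thesis by linarith
qed

lemma rate_nonneg: "rate p n S \<ge> 0"
proof -
  have "expect_lib p n (\<lambda>x1 x2. real (length (codeword S (1, 1) x1 x2))) / real n \<le> rate p n S"
    unfolding rate_def by (intro Max_ge) (auto simp: demands_def)
  moreover have "expect_lib p n (\<lambda>x1 x2. real (length (codeword S (1, 1) x1 x2))) \<ge> 0"
    unfolding expect_lib_def wt_eq_iid_weight by (intro sum_nonneg) (simp add: iid_weight_nonneg)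
  ultimately show ?thesis by (meson divide_nonneg_nonneg of_nat_0_le_iff order_trans)
qed

text \<open>The per-symbol excess of the block-length-\<open>n\<close> cut-set bounds over their limits: the
  overhead of the variable-length codewords and the Fano terms.\<close>

definition cacm_slack :: "('a::finite \<times> 'b::finite) pmf \<Rightarrow> nat \<Rightarrow> ('a, 'b) cacm \<Rightarrow> real" where
  "cacm_slack p n S = 2 / ln 2 * (rate p n S / real n) + (2 * log 2 (real n + 1) + 3) / real n
     + 2 * (log 2 (real CARD('a)) + log 2 (real CARD('b))) * Pe p n S"

locale cacm_block =
  fixes p :: "('a::finite \<times> 'b::finite) pmf" and n :: nat and M :: real and S :: "('a, 'b) cacm"
  assumes block_length_pos: "n \<ge> 1" and valid: "valid_cacm n M S"
begin

sublocale iid: finite_prob_weights "length_lists n" "iid_weight p"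
  by (rule finite_prob_weights_iid)

definition transmission :: "nat \<times> nat \<Rightarrow> ('a \<times> 'b) list \<Rightarrow> bool list" where
  "transmission d xs = codeword S d (map fst xs) (map snd xs)"

definition cache_content :: "nat \<Rightarrow> ('a \<times> 'b) list \<Rightarrow> nat" where
  "cache_content i xs = cache S i (map fst xs) (map snd xs)"

lemma rv_entropy_library: "iid.H (\<lambda>xs. (map fst xs, map snd xs)) = real n * entropy_pmf p"
proof -
  have "iid.H (\<lambda>xs. (map fst xs, map snd xs)) = iid.H (map id)"
    by (rule iid.rv_entropy_cong) (simp add: map_fst_snd_eq_iff)
  then show ?thesis using rv_entropy_map_iid[where n = n and q = p and g = id] by simp
qed

lemma rv_entropy_library_swap: "iid.H (\<lambda>xs. (map snd xs, map fst xs)) = real n * entropy_pmf p"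
proof -
  have "iid.H (\<lambda>xs. (map snd xs, map fst xs)) = iid.H (\<lambda>xs. (map fst xs, map snd xs))"
    by (rule iid.rv_entropy_cong) auto
  then show ?thesis by (simp add: rv_entropy_library)
qed

lemma rv_entropy_transmission_le:
  assumes "d \<in> demands"
  shows "iid.H (transmission d) \<le> real n * rate p n S + (rate p n S / ln 2 + log 2 (real n + 1))"
proof -
  define \<theta> where "\<theta> = real n / (real n + 1)"
  define L where "L = (\<Sum>xs\<in>length_lists n. iid_weight p xs * real (length (transmission d xs)))"
  have n: "real n > 0" using block_length_pos by simp
  have \<theta>: "0 < \<theta>" "\<theta> < 1" unfolding \<theta>_def using n by auto
  have L_nonneg: "L \<ge> 0" unfolding L_def by (intro sum_nonneg) (simp add: iid_weight_nonneg)
  have "L / real n \<le> rate p n S"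
    unfolding rate_def L_def using assms
    by (intro Max_ge) (auto simp: demands_def transmission_def expect_lib_def seqs_eq_length_lists wt_eq_iid_weight)
  then have L_le: "L \<le> real n * rate p n S" "L / real n \<le> rate p n S"
    using n by (simp_all add: field_simps)
  have "1 - log 2 \<theta> \<le> 1 + 1 / (real n * ln 2)"
  proof -
    have "- log 2 \<theta> = ln ((real n + 1) / real n) / ln 2"
      unfolding \<theta>_def log_def using n by (simp add: ln_div field_simps)
    also have "\<dots> \<le> ((real n + 1) / real n - 1) / ln 2"
      using n by (intro divide_right_mono ln_le_minus_one) auto
    also have "\<dots> = 1 / (real n * ln 2)" using n by (simp add: field_simps)
    finally show ?thesis by simp
  qed
  have "iid.H (transmission d) \<le> log 2 (1 / (1 - \<theta>)) + (1 - log 2 \<theta>) * L"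
    using iid.rv_entropy_le_mean_length[OF \<theta>] unfolding L_def .
  also have "log 2 (1 / (1 - \<theta>)) = log 2 (real n + 1)"
    unfolding \<theta>_def using n by (simp add: field_simps)
  also have "(1 - log 2 \<theta>) * L \<le> (1 + 1 / (real n * ln 2)) * L"
    by (rule mult_right_mono) fact+
  also have "\<dots> = L + (L / real n) / ln 2" by (simp add: field_simps)
  also have "\<dots> \<le> real n * rate p n S + rate p n S / ln 2"
    using L_le by (intro add_mono divide_right_mono) auto
  finally show ?thesis by simp
qed

lemma rv_entropy_cache_le:
  assumes "i \<in> {1, 2}"
  shows "iid.H (cache_content i) \<le> real n * M"
proof -
  define r where "r = 2 powr (real n * M)"
  have "1 \<le> cache_content i xs \<and> real (cache_content i xs) \<le> r" if "xs \<in> length_lists n" for xs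
    using valid assms that unfolding valid_cacm_def seqs_eq_length_lists cache_content_def r_def by blast
  then have sub: "cache_content i ` length_lists n \<subseteq> {1..nat \<lfloor>r\<rfloor>}"
    using le_nat_floor by fastforce
  have card_pos: "card (cache_content i ` length_lists n) > 0"
    using length_lists_nonempty by (simp add: card_gt_0_iff finite_length_lists)
  have "real (card (cache_content i ` length_lists n)) \<le> real (card {1..nat \<lfloor>r\<rfloor>})"
    by (intro of_nat_mono card_mono) (use sub in auto)
  also have "\<dots> \<le> r" unfolding r_def by simp
  finally have card_le: "real (card (cache_content i ` length_lists n)) \<le> r" .
  have "iid.H (cache_content i) \<le> log 2 (card (cache_content i ` length_lists n))"
    by (rule iid.rv_entropy_le_log_card[OF length_lists_nonempty])
  also have "\<dots> \<le> log 2 r"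
    using card_le card_pos by (intro log_mono) auto
  also have "\<dots> = real n * M" unfolding r_def by simp
  finally show ?thesis .
qed

lemma decoding_error_fst_le_Pe:
  assumes "d \<in> demands" "i \<in> {1, 2}" "req d i = 1"
  shows "iid.Pr (\<lambda>xs. fst (dec S i d (transmission d xs) (cache_content i xs)) \<noteq> map fst xs) True
           \<le> Pe p n S"
  using prob_err_event_le_Pe[OF assms(1,2), of p n S] assms(3)
  unfolding prob_lib_def rv_prob_def err_event_def seqs_eq_length_lists wt_eq_iid_weight
    transmission_def cache_content_def codeword_def
  by simp

lemma decoding_error_snd_le_Pe:
  assumes "d \<in> demands" "i \<in> {1, 2}" "req d i = 2"
  shows "iid.Pr (\<lambda>xs. snd (dec S i d (transmission d xs) (cache_content i xs)) \<noteq> map snd xs) True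
           \<le> Pe p n S"
  using prob_err_event_le_Pe[OF assms(1,2), of p n S] assms(3)
  unfolding prob_lib_def rv_prob_def err_event_def seqs_eq_length_lists wt_eq_iid_weight
    transmission_def cache_content_def codeword_def
  by simp

lemma le_plus_cacm_slack:
  assumes "real n * x \<le> real n * y + 2 * (rate p n S / ln 2 + log 2 (real n + 1)) + 3
      + 2 * (Pe p n S * (log 2 (card (length_lists n :: 'a list set))
                         + log 2 (card (length_lists n :: 'b list set))))"
  shows "x \<le> y + cacm_slack p n S"
proof -
  have n: "real n > 0" using block_length_pos by simp
  have "real n * cacm_slack p n S = 2 * (rate p n S / ln 2 + log 2 (real n + 1)) + 3
      + 2 * (Pe p n S * (log 2 (card (length_lists n :: 'a list set))
                         + log 2 (card (length_lists n :: 'b list set))))"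
    using n unfolding cacm_slack_def log_card_length_lists by (simp add: field_simps)
  then have "real n * x \<le> real n * (y + cacm_slack p n S)"
    using assms by (simp add: distrib_left)
  then show ?thesis using n by simp
qed

lemma fano_terms_nonneg:
  "Pe p n S * log 2 (card (length_lists n :: 'a list set)) \<ge> 0"
  "Pe p n S * log 2 (card (length_lists n :: 'b list set)) \<ge> 0"
  by (simp_all add: Pe_nonneg log_card_length_lists)

lemma coding_overhead_nonneg: "rate p n S / ln 2 + log 2 (real n + 1) \<ge> 0"
  using rate_nonneg[of p n S] by simp

lemma two_receivers_cut_set: "entropy_pmf p - 2 * M \<le> rate p n S + cacm_slack p n S"
proof -
  let ?d = "(1::nat, 2::nat)"
  let ?W = "\<lambda>xs. (transmission ?d xs, cache_content 1 xs, cache_content 2 xs)"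
  have d: "?d \<in> demands" by (simp add: demands_def)
  have err1: "iid.Pr (\<lambda>xs. fst (dec S 1 ?d (transmission ?d xs) (cache_content 1 xs)) \<noteq> map fst xs) True
      \<le> Pe p n S"
    by (rule decoding_error_fst_le_Pe) (auto simp: demands_def req_def)
  have err2: "iid.Pr (\<lambda>xs. snd (dec S 2 ?d (transmission ?d xs) (cache_content 2 xs)) \<noteq> map snd xs) True
      \<le> Pe p n S"
    by (rule decoding_error_snd_le_Pe) (auto simp: demands_def req_def)
  have "iid.H (\<lambda>xs. (map fst xs, map snd xs)) \<le> iid.H ?W + 2
      + Pe p n S * (log 2 (card (length_lists n :: 'a list set))
                    + log 2 (card (length_lists n :: 'b list set)))"
    by (rule iid.entropy_pair_le_of_decodable[where
          \<phi> = "\<lambda>(y, z1, z2). fst (dec S 1 ?d y z1)" and \<psi> = "\<lambda>(y, z1, z2). snd (dec S 2 ?d y z2)"])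
      (use err1 err2 in \<open>simp_all add: finite_length_lists length_lists_nonempty map_image_length_lists\<close>)
  moreover have "iid.H ?W \<le> iid.H (transmission ?d) + iid.H (cache_content 1) + iid.H (cache_content 2)"
    by (rule iid.rv_entropy_subadditive3)
  ultimately show ?thesis
    using rv_entropy_library rv_entropy_transmission_le[OF d] rv_entropy_cache_le[of 1]
      rv_entropy_cache_le[of 2] fano_terms_nonneg coding_overhead_nonneg
    by (intro le_plus_cacm_slack) (simp add: distrib_left right_diff_distrib)
qed

lemma one_receiver_cut_set: "entropy_pmf p - M \<le> 2 * rate p n S + cacm_slack p n S"
proof -
  let ?d = "(1::nat, 2::nat)" and ?d' = "(2::nat, 1::nat)"
  let ?W = "\<lambda>xs. (transmission ?d xs, transmission ?d' xs, cache_content 1 xs)"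
  have d: "?d \<in> demands" "?d' \<in> demands" by (simp_all add: demands_def)
  have err1: "iid.Pr (\<lambda>xs. fst (dec S 1 ?d (transmission ?d xs) (cache_content 1 xs)) \<noteq> map fst xs) True
      \<le> Pe p n S"
    by (rule decoding_error_fst_le_Pe) (auto simp: demands_def req_def)
  have err2: "iid.Pr (\<lambda>xs. snd (dec S 1 ?d' (transmission ?d' xs) (cache_content 1 xs)) \<noteq> map snd xs) True
      \<le> Pe p n S"
    by (rule decoding_error_snd_le_Pe) (auto simp: demands_def req_def)
  have "iid.H (\<lambda>xs. (map fst xs, map snd xs)) \<le> iid.H ?W + 2
      + Pe p n S * (log 2 (card (length_lists n :: 'a list set))
                    + log 2 (card (length_lists n :: 'b list set)))"
    by (rule iid.entropy_pair_le_of_decodable[where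
          \<phi> = "\<lambda>(y, y', z). fst (dec S 1 ?d y z)" and \<psi> = "\<lambda>(y, y', z). snd (dec S 1 ?d' y' z)"])
      (use err1 err2 in \<open>simp_all add: finite_length_lists length_lists_nonempty map_image_length_lists\<close>)
  moreover have "iid.H ?W \<le> iid.H (transmission ?d) + iid.H (transmission ?d') + iid.H (cache_content 1)"
    by (rule iid.rv_entropy_subadditive3)
  ultimately show ?thesis
    using rv_entropy_library rv_entropy_transmission_le[OF d(1)] rv_entropy_transmission_le[OF d(2)]
      rv_entropy_cache_le[of 1] fano_terms_nonneg coding_overhead_nonneg
    by (intro le_plus_cacm_slack) (simp add: distrib_left right_diff_distrib)
qed

lemma crossed_cut_set_fst:
  "entropy_pmf p + entropy_pmf (map_pmf fst p) - 2 * M \<le> 2 * rate p n S + cacm_slack p n S"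
proof -
  let ?d = "(1::nat, 2::nat)" and ?d' = "(2::nat, 1::nat)"
  let ?A = "\<lambda>xs. (transmission ?d xs, cache_content 1 xs)"
  let ?B = "\<lambda>xs. (transmission ?d' xs, cache_content 2 xs)"
  have d: "?d \<in> demands" "?d' \<in> demands" by (simp_all add: demands_def)
  have errA: "iid.Pr (\<lambda>xs. fst (dec S 1 ?d (transmission ?d xs) (cache_content 1 xs)) \<noteq> map fst xs) True
      \<le> Pe p n S"
    by (rule decoding_error_fst_le_Pe) (auto simp: demands_def req_def)
  have errB: "iid.Pr (\<lambda>xs. fst (dec S 2 ?d' (transmission ?d' xs) (cache_content 2 xs)) \<noteq> map fst xs) True
      \<le> Pe p n S"
    by (rule decoding_error_fst_le_Pe) (auto simp: demands_def req_def)
  have errV: "iid.Pr (\<lambda>xs. snd (dec S 2 ?d (transmission ?d xs) (cache_content 2 xs)) \<noteq> map snd xs) True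
      \<le> Pe p n S"
    by (rule decoding_error_snd_le_Pe) (auto simp: demands_def req_def)
  have "iid.H (\<lambda>xs. (map fst xs, map snd xs)) + iid.H (map fst) \<le> iid.H ?A + iid.H ?B + 3
      + Pe p n S * (2 * log 2 (card (length_lists n :: 'a list set))
                    + log 2 (card (length_lists n :: 'b list set)))"
    by (rule iid.entropy_pair_plus_le_of_decodable[where
          \<phi>A = "\<lambda>(y, z). fst (dec S 1 ?d y z)" and \<phi>B = "\<lambda>(y, z). fst (dec S 2 ?d' y z)"
          and \<phi>V = "\<lambda>((y, z1), (y', z2)). snd (dec S 2 ?d y z2)"])
      (use errA errB errV in
        \<open>simp_all add: finite_length_lists length_lists_nonempty map_image_length_lists\<close>)
  moreover have "iid.H ?A \<le> iid.H (transmission ?d) + iid.H (cache_content 1)"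
    and "iid.H ?B \<le> iid.H (transmission ?d') + iid.H (cache_content 2)"
    by (rule iid.rv_entropy_subadditive)+
  ultimately show ?thesis
    using rv_entropy_library rv_entropy_map_iid[where n = n and q = p and g = fst]
      rv_entropy_transmission_le[OF d(1)] rv_entropy_transmission_le[OF d(2)]
      rv_entropy_cache_le[of 1] rv_entropy_cache_le[of 2] fano_terms_nonneg coding_overhead_nonneg
    by (intro le_plus_cacm_slack) (simp add: distrib_left right_diff_distrib)
qed

lemma crossed_cut_set_snd:
  "entropy_pmf p + entropy_pmf (map_pmf snd p) - 2 * M \<le> 2 * rate p n S + cacm_slack p n S"
proof -
  let ?d = "(1::nat, 2::nat)" and ?d' = "(2::nat, 1::nat)"
  let ?A = "\<lambda>xs. (transmission ?d' xs, cache_content 1 xs)"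
  let ?B = "\<lambda>xs. (transmission ?d xs, cache_content 2 xs)"
  have d: "?d \<in> demands" "?d' \<in> demands" by (simp_all add: demands_def)
  have errA: "iid.Pr (\<lambda>xs. snd (dec S 1 ?d' (transmission ?d' xs) (cache_content 1 xs)) \<noteq> map snd xs) True
      \<le> Pe p n S"
    by (rule decoding_error_snd_le_Pe) (auto simp: demands_def req_def)
  have errB: "iid.Pr (\<lambda>xs. snd (dec S 2 ?d (transmission ?d xs) (cache_content 2 xs)) \<noteq> map snd xs) True
      \<le> Pe p n S"
    by (rule decoding_error_snd_le_Pe) (auto simp: demands_def req_def)
  have errV: "iid.Pr (\<lambda>xs. fst (dec S 2 ?d' (transmission ?d' xs) (cache_content 2 xs)) \<noteq> map fst xs) True
      \<le> Pe p n S"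
    by (rule decoding_error_fst_le_Pe) (auto simp: demands_def req_def)
  have "iid.H (\<lambda>xs. (map snd xs, map fst xs)) + iid.H (map snd) \<le> iid.H ?A + iid.H ?B + 3
      + Pe p n S * (2 * log 2 (card (length_lists n :: 'b list set))
                    + log 2 (card (length_lists n :: 'a list set)))"
    by (rule iid.entropy_pair_plus_le_of_decodable[where
          \<phi>A = "\<lambda>(y, z). snd (dec S 1 ?d' y z)" and \<phi>B = "\<lambda>(y, z). snd (dec S 2 ?d y z)"
          and \<phi>V = "\<lambda>((y, z1), (y', z2)). fst (dec S 2 ?d' y z2)"])
      (use errA errB errV in
        \<open>simp_all add: finite_length_lists length_lists_nonempty map_image_length_lists\<close>)
  moreover have "iid.H ?A \<le> iid.H (transmission ?d') + iid.H (cache_content 1)"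
    and "iid.H ?B \<le> iid.H (transmission ?d) + iid.H (cache_content 2)"
    by (rule iid.rv_entropy_subadditive)+
  ultimately show ?thesis
    using rv_entropy_library_swap rv_entropy_map_iid[where n = n and q = p and g = snd]
      rv_entropy_transmission_le[OF d(1)] rv_entropy_transmission_le[OF d(2)]
      rv_entropy_cache_le[of 1] rv_entropy_cache_le[of 2] fano_terms_nonneg coding_overhead_nonneg
    by (intro le_plus_cacm_slack) (simp add: distrib_left right_diff_distrib)
qed

end

lemma le_of_eventually_le_limsup:
  fixes r u :: "nat \<Rightarrow> real"
  assumes c: "c \<ge> 0" and le: "eventually (\<lambda>k. a \<le> c * r k + u k) sequentially"
    and u: "u \<longlonglongrightarrow> 0" and limsup: "limsup (\<lambda>k. ereal (r k)) \<le> ereal R"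
  shows "a \<le> c * R"
proof (rule ccontr)
  assume "\<not> a \<le> c * R"
  define \<eta> where "\<eta> = (a - c * R) / (2 * (c + 1))"
  have \<eta>: "\<eta> > 0" using \<open>\<not> a \<le> c * R\<close> c unfolding \<eta>_def by simp
  have "limsup (\<lambda>k. ereal (r k)) < ereal (R + \<eta>)"
    using limsup \<eta> by (simp add: le_less_trans)
  then have "eventually (\<lambda>k. ereal (r k) < ereal (R + \<eta>)) sequentially"
    by (rule Limsup_lessD)
  moreover have "eventually (\<lambda>k. u k < \<eta>) sequentially"
    using order_tendstoD(2)[OF u \<eta>] .
  ultimately obtain k where k: "a \<le> c * r k + u k" "r k < R + \<eta>" "u k < \<eta>"
    using eventually_happens'[OF sequentially_bot, OF eventually_conj[OF le eventually_conj]] by auto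
  have "c * r k \<le> c * (R + \<eta>)" using k(2) c by (intro mult_left_mono) auto
  moreover have "(c + 1) * \<eta> = (a - c * R) / 2" using c unfolding \<eta>_def by (simp add: field_simps)
  ultimately show False using k(1,3) \<open>\<not> a \<le> c * R\<close> by (simp add: algebra_simps)
qed

lemma cacm_slack_tendsto_zero:
  fixes p :: "('a::finite \<times> 'b::finite) pmf" and S :: "nat \<Rightarrow> ('a, 'b) cacm"
  assumes nn: "strict_mono nn" and Pe: "(\<lambda>k. Pe p (nn k) (S k)) \<longlonglongrightarrow> 0"
    and limsup: "limsup (\<lambda>k. ereal (rate p (nn k) (S k))) \<le> ereal R"
  shows "(\<lambda>k. cacm_slack p (nn k) (S k)) \<longlonglongrightarrow> 0"
proof -
  define r where "r k = rate p (nn k) (S k)" for k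
  have n_lim: "filterlim (\<lambda>k. real (nn k)) at_top sequentially"
    using filterlim_subseq[OF nn] filterlim_real_sequentially by (rule filterlim_compose[rotated])
  have "((\<lambda>x::real. (2 * log 2 (x + 1) + 3) / x) \<longlongrightarrow> 0) at_top" by real_asymp
  then have log_lim: "(\<lambda>k. (2 * log 2 (real (nn k) + 1) + 3) / real (nn k)) \<longlonglongrightarrow> 0"
    using n_lim by (rule filterlim_compose)
  have "((\<lambda>x::real. 1 / x) \<longlongrightarrow> 0) at_top" by real_asymp
  then have inv_lim: "(\<lambda>k. 1 / real (nn k)) \<longlonglongrightarrow> 0"
    using n_lim by (rule filterlim_compose)
  have "limsup (\<lambda>k. ereal (r k)) < ereal (R + 1)"
    using limsup unfolding r_def by (simp add: le_less_trans)
  then have r_bound: "eventually (\<lambda>k. r k < R + 1) sequentially"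
    using Limsup_lessD by fastforce
  have rate_lim: "(\<lambda>k. r k / real (nn k)) \<longlonglongrightarrow> 0"
  proof (rule tendsto_sandwich)
    show "eventually (\<lambda>k. 0 \<le> r k / real (nn k)) sequentially"
      by (simp add: r_def rate_nonneg)
    show "eventually (\<lambda>k. r k / real (nn k) \<le> (R + 1) * (1 / real (nn k))) sequentially"
      using r_bound by eventually_elim (simp add: divide_right_mono)
    show "(\<lambda>k. (R + 1) * (1 / real (nn k))) \<longlonglongrightarrow> 0"
      using tendsto_mult_right_zero[OF inv_lim] by simp
  qed simp
  then show ?thesis
    unfolding cacm_slack_def r_def by (intro tendsto_add_zero tendsto_mult_right_zero log_lim Pe)
qed

lemma achievable_cut_set_bounds:
  fixes p :: "('a::finite \<times> 'b::finite) pmf"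
  assumes "achievable p R M"
  shows "entropy_pmf p - 2 * M \<le> R"
    and "entropy_pmf p - M \<le> 2 * R"
    and "entropy_pmf p + entropy_pmf (map_pmf fst p) - 2 * M \<le> 2 * R"
    and "entropy_pmf p + entropy_pmf (map_pmf snd p) - 2 * M \<le> 2 * R"
proof -
  obtain nn :: "nat \<Rightarrow> nat" and S :: "nat \<Rightarrow> ('a, 'b) cacm" where
    nn: "strict_mono nn" and valid: "\<And>k. valid_cacm (nn k) M (S k)"
    and Pe: "(\<lambda>k. Pe p (nn k) (S k)) \<longlonglongrightarrow> 0"
    and limsup: "limsup (\<lambda>k. ereal (rate p (nn k) (S k))) \<le> ereal R"
    using assms unfolding achievable_def by blast
  have blocks: "eventually (\<lambda>k. cacm_block (nn k) M (S k)) sequentially"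
    unfolding eventually_sequentially cacm_block_def
    using valid seq_suble[OF nn] by (metis le_trans)
  have bound: "a \<le> c * R"
    if "c \<ge> 0" "\<And>k. cacm_block (nn k) M (S k) \<Longrightarrow> a \<le> c * rate p (nn k) (S k) + cacm_slack p (nn k) (S k)"
    for a c
    using that(1) _ cacm_slack_tendsto_zero[OF nn Pe limsup] limsup
  proof (rule le_of_eventually_le_limsup)
    show "eventually (\<lambda>k. a \<le> c * rate p (nn k) (S k) + cacm_slack p (nn k) (S k)) sequentially"
      using blocks by eventually_elim (rule that(2))
  qed
  have "entropy_pmf p - 2 * M \<le> 1 * R"
    by (rule bound) (simp_all add: cacm_block.two_receivers_cut_set)
  then show "entropy_pmf p - 2 * M \<le> R" by simp
  show "entropy_pmf p - M \<le> 2 * R"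
    by (rule bound) (simp_all add: cacm_block.one_receiver_cut_set)
  show "entropy_pmf p + entropy_pmf (map_pmf fst p) - 2 * M \<le> 2 * R"
    by (rule bound) (simp_all add: cacm_block.crossed_cut_set_fst)
  show "entropy_pmf p + entropy_pmf (map_pmf snd p) - 2 * M \<le> 2 * R"
    by (rule bound) (simp_all add: cacm_block.crossed_cut_set_snd)
qed

lemma Inf_common_upper_bounds3: "Inf {x :: real. x \<ge> a \<and> x \<ge> b \<and> x \<ge> c} = max a (max b c)"
  by (rule cInf_eq_minimum) auto

lemma RLB_eq:
  "RLB p M = max (entropy_pmf p - 2 * M) (max ((entropy_pmf p - M) / 2)
     ((entropy_pmf p + max (entropy_pmf (map_pmf fst p)) (entropy_pmf (map_pmf snd p))) / 2 - M))"
  unfolding RLB_def by (rule Inf_common_upper_bounds3)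

lemma RLB_le_of_achievable:
  assumes "achievable p R M"
  shows "RLB p M \<le> R"
proof -
  note bounds = achievable_cut_set_bounds[OF assms]
  have "(entropy_pmf p + max (entropy_pmf (map_pmf fst p)) (entropy_pmf (map_pmf snd p))) / 2 - M \<le> R"
  proof (cases "entropy_pmf (map_pmf fst p) \<le> entropy_pmf (map_pmf snd p)")
    case True
    then show ?thesis unfolding max_absorb2[OF True] add_divide_distrib using bounds(4) by linarith
  next
    case False
    then show ?thesis unfolding max_absorb1[OF less_imp_le[OF not_le_imp_less[OF False]]]
        add_divide_distrib
      using bounds(3) by linarith
  qed
  moreover have "(entropy_pmf p - M) / 2 \<le> R"
    unfolding diff_divide_distrib using bounds(2) by linarith
  ultimately show ?thesis unfolding RLB_eq using bounds(1) by simp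
qed

lemma RLB_le_of_region:
  assumes "(R, M) \<in> region p"
  shows "RLB p M \<le> R"
proof -
  have "closed {x :: real \<times> real. RLB p (snd x) \<le> fst x}"
    unfolding RLB_eq by (intro closed_Collect_le continuous_intros) auto
  then have "region p \<subseteq> {x. RLB p (snd x) \<le> fst x}"
    unfolding region_def by (rule closure_minimal[rotated]) (auto intro: RLB_le_of_achievable)
  then show ?thesis using assms by auto
qed

theorem theorem1:
  fixes p :: "('a::finite \<times> 'b::finite) pmf" and M :: real
  assumes "M \<ge> 0"
  shows "ereal (RLB p M) \<le> Rstar p M"
  unfolding Rstar_def by (auto intro!: Inf_greatest RLB_le_of_region)

end
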